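(* Let $r:[0,1]^2\to\mathbb{R}$ be a covariance kernel admitting a Mercer decomposition $r(s,t)=\sum_{j=1}^{q}\lambda_j\phi_j(s)\phi_j(t)$ with finite rank $q$, eigenvalues $\lambda_j>0$, and orthonormal eigenfunctions $\phi_1,\dots,\phi_q$ that are real analytic on $(0,1)$. Let $\delta\in(0,1)$ and let $K$ be an integer with $K>\delta^{-1}(2q+1)$. Then for Lebesgue-almost every grid $(t_1,\dots,t_K)\in\mathcal{T}_K$, the matrix $R^K=\{r(t_j,t_l)\}_{j,l=1}^K$ is the unique solution of $$\min_{\theta\in\mathbb{R}^{K\times K}}\mathrm{rank}(\theta)\quad\text{subject to}\quad \|P^K_\delta\circ(R^K-\theta)\|_F^2=0.$$ Equivalently, for almost every grid in $\mathcal{T}_K$ and all $\tau>0$ sufficiently small, $$R^K=\arg\min_{\theta\in\mathbb{R}^{K\times K}}\Big\{K^{-2}\|P^K_\delta\circ(R^K-\theta)\|_F^2+\tau\,\mathrm{rank}(\theta)\Big\}.$$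
   Context: For an integer $K\ge1$, $\{I_{j,K}\}_{j=1}^K$ denotes the partition of $[0,1]$ into consecutive intervals of length $1/K$, and $\mathcal{T}_K=\{(x_1,\dots,x_K)\in\mathbb{R}^K: x_j\in I_{j,K},\ j=1,\dots,K\}$ is the set of grids (perturbations of the regular grid). $P^K_\delta\in\mathbb{R}^{K\times K}$ is the band mask $P^K_\delta(j,l)=1\{|j-l|<\lfloor K\delta\rfloor-1\}$, $\circ$ denotes the entrywise (Hadamard) product, and $\|\cdot\|_F$ the Frobenius norm. *)

theory Defs
  imports "HOL-Analysis.Analysis" "Jordan_Normal_Form.DL_Rank"
begin

definition real_analytic_at :: "(real \<Rightarrow> real) \<Rightarrow> real \<Rightarrow> bool" where
  "real_analytic_at f x \<longleftrightarrow>
     (\<exists>a :: nat \<Rightarrow> real. \<exists>e > 0. \<forall>y. \<bar>y - x\<bar> < e \<longrightarrow> (\<lambda>n. a n * (y - x) ^ n) sums f y)"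

text \<open>Grids: t j lies in the (j+1)-th interval I_{j+1,K} = [j/K, (j+1)/K], indices j = 0..K-1.\<close>
definition grid_set :: "nat \<Rightarrow> (nat \<Rightarrow> real) set" where
  "grid_set K = {t. \<forall>j<K. t j \<in> {real j / real K .. (real j + 1) / real K}}"

text \<open>Band mask P^K_delta (0-based indices; only differences matter).\<close>
definition band_mask :: "nat \<Rightarrow> real \<Rightarrow> nat \<Rightarrow> nat \<Rightarrow> real" where
  "band_mask K \<delta> j l = (if \<bar>int j - int l\<bar> < \<lfloor>real K * \<delta>\<rfloor> - 1 then 1 else 0)"

definition kernel_mat :: "(real \<Rightarrow> real \<Rightarrow> real) \<Rightarrow> nat \<Rightarrow> (nat \<Rightarrow> real) \<Rightarrow> real mat" where
  "kernel_mat r K t = mat K K (\<lambda>(j, l). r (t j) (t l))"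

definition masked_frob_sq :: "nat \<Rightarrow> real \<Rightarrow> real mat \<Rightarrow> real mat \<Rightarrow> real" where
  "masked_frob_sq K \<delta> A B =
     (\<Sum>j<K. \<Sum>l<K. (band_mask K \<delta> j l * (A $$ (j, l) - B $$ (j, l)))\<^sup>2)"

definition mrank :: "nat \<Rightarrow> real mat \<Rightarrow> nat" where
  "mrank K A = vec_space.rank K A"

end

theory Submission
  imports Defs "Jordan_Normal_Form.DL_Rank_Submatrix"
begin

text \<open>Write the kernel matrix as R = Phi Lambda Phi' with Phi j k = \<phi> k (t j). Every q\<times>q block
  of R on consecutive rows a.. and consecutive columns b.. factors as Phi_a Lambda Phi_b', where
  Phi_a samples the eigenfunctions at t a, ..., t (a + q - 1). For almost every grid all Phi_a are
  nonsingular: expanded along its last row, det Phi_a is a linear combination of the \<phi> k at the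
  last sample point whose top coefficient is the previous minor; by orthonormality the
  combination does not vanish identically, by analyticity its zeros are countable, and Fubini
  gives a null set.

  With all these blocks nonsingular, a matrix of rank at most q agreeing with R on the band
  |j - l| < 2q agrees with R everywhere: an entry further out is the corner of a singular
  (q+1)\<times>(q+1) block whose complementary minor is a nonsingular q\<times>q block of R, so it is
  determined by the entries closer to the diagonal. In the penalized problem a competitor of smaller rank pays a masked
  error bounded away from zero, since the leading q\<times>q block of R is nonsingular and the
  determinant is continuous.\<close>

section \<open>Real analytic functions\<close>

lemma real_analytic_at_add:
  assumes "real_analytic_at f x" "real_analytic_at g x"
  shows "real_analytic_at (\<lambda>y. f y + g y) x"
proof -
  obtain a e where "e > 0" and a: "\<And>y. \<bar>y - x\<bar> < e \<Longrightarrow> (\<lambda>n. a n * (y - x) ^ n) sums f y"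
    using assms(1) unfolding real_analytic_at_def by blast
  obtain b d where "d > 0" and b: "\<And>y. \<bar>y - x\<bar> < d \<Longrightarrow> (\<lambda>n. b n * (y - x) ^ n) sums g y"
    using assms(2) unfolding real_analytic_at_def by blast
  have "(\<lambda>n. (a n + b n) * (y - x) ^ n) sums (f y + g y)" if "\<bar>y - x\<bar> < min e d" for y
    using sums_add[OF a b] that by (simp add: distrib_right)
  then show ?thesis
    unfolding real_analytic_at_def using \<open>e > 0\<close> \<open>d > 0\<close>
    by (intro exI[of _ "\<lambda>n. a n + b n"] exI[of _ "min e d"]) auto
qed

lemma real_analytic_at_cmult:
  assumes "real_analytic_at f x"
  shows "real_analytic_at (\<lambda>y. c * f y) x"
proof -
  obtain a e where "e > 0" and a: "\<And>y. \<bar>y - x\<bar> < e \<Longrightarrow> (\<lambda>n. a n * (y - x) ^ n) sums f y"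
    using assms unfolding real_analytic_at_def by blast
  have "(\<lambda>n. c * a n * (y - x) ^ n) sums (c * f y)" if "\<bar>y - x\<bar> < e" for y
    using sums_mult[OF a[OF that], of c] by (simp add: mult.assoc)
  then show ?thesis
    unfolding real_analytic_at_def using \<open>e > 0\<close> by (intro exI[of _ "\<lambda>n. c * a n"] exI[of _ e]) simp
qed

lemma real_analytic_at_const: "real_analytic_at (\<lambda>_. c) x"
proof -
  have "(\<lambda>n. (if n = 0 then c else 0) * (y - x) ^ n) = (\<lambda>n. if n = 0 then c else 0)" for y
    by (rule ext) simp
  then have "(\<lambda>n. (if n = 0 then c else 0) * (y - x) ^ n) sums c" for y
    using sums_single[of 0 "\<lambda>_. c"] by simp
  then show ?thesis
    unfolding real_analytic_at_def by (intro exI[of _ "\<lambda>n. if n = 0 then c else 0"] exI[of _ 1]) auto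
qed

lemma real_analytic_at_sum:
  assumes "\<And>k. k \<in> S \<Longrightarrow> real_analytic_at (f k) x"
  shows "real_analytic_at (\<lambda>y. \<Sum>k\<in>S. f k y) x"
  using assms
  by (induction S rule: infinite_finite_induct) (simp_all add: real_analytic_at_const real_analytic_at_add)

lemma real_analytic_at_imp_isCont:
  assumes "real_analytic_at f x"
  shows "isCont f x"
proof -
  obtain a e where "e > 0" and a: "\<And>y. \<bar>y - x\<bar> < e \<Longrightarrow> (\<lambda>n. a n * (y - x) ^ n) sums f y"
    using assms unfolding real_analytic_at_def by blast
  have "summable (\<lambda>n. a n * (e / 2) ^ n)"
    using a[of "x + e / 2"] \<open>e > 0\<close> by (auto simp: sums_iff)
  then have "isCont (\<lambda>y. \<Sum>n. a n * (y - x) ^ n) x"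
    using \<open>e > 0\<close> by (intro isCont_powser' continuous_intros) auto
  moreover have "\<forall>\<^sub>F y in nhds x. f y = (\<Sum>n. a n * (y - x) ^ n)"
    unfolding eventually_nhds_metric using \<open>e > 0\<close> a
    by (intro exI[of _ e]) (auto simp: dist_real_def sums_iff)
  ultimately show ?thesis
    by (simp add: isCont_cong)
qed

text \<open>Either the power series at x vanishes identically, or f y / (y - x) ^ n extends
  continuously to x with value the first nonzero coefficient a n.\<close>
lemma real_analytic_at_zero_dichotomy:
  assumes "real_analytic_at f x"
  shows "(\<forall>\<^sub>F y in nhds x. f y = 0) \<or> (\<forall>\<^sub>F y in at x. f y \<noteq> 0)"
proof -
  obtain a e where "e > 0" and a: "\<And>y. \<bar>y - x\<bar> < e \<Longrightarrow> (\<lambda>n. a n * (y - x) ^ n) sums f y"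
    using assms unfolding real_analytic_at_def by blast
  show ?thesis
  proof (cases "\<forall>n. a n = 0")
    case True
    then have "f y = 0" if "\<bar>y - x\<bar> < e" for y
      using a[OF that] sums_unique2[OF sums_zero] True by force
    then show ?thesis
      unfolding eventually_nhds_metric using \<open>e > 0\<close> by (auto simp: dist_real_def)
  next
    case False
    define n0 where "n0 = (LEAST n. a n \<noteq> 0)"
    have "a n0 \<noteq> 0"
      using False LeastI_ex[of "\<lambda>n. a n \<noteq> 0"] unfolding n0_def by blast
    have below: "a i = 0" if "i < n0" for i
      using not_less_Least[OF that[unfolded n0_def]] by blast
    define g where "g h = (\<Sum>n. a (n + n0) * h ^ n)" for h
    have g_sums: "(\<lambda>n. a (n + n0) * h ^ n) sums (f (x + h) / h ^ n0)"
      if "\<bar>h\<bar> < e" "h \<noteq> 0" for h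
    proof -
      have "(\<lambda>n. a (n + n0) * h ^ (n + n0)) sums f (x + h)"
        using a[of "x + h"] that sums_zero_iff_shift[of n0 "\<lambda>n. a n * h ^ n"] below by simp
      from sums_divide[OF this, of "h ^ n0"] show ?thesis
        using that by (simp add: power_add)
    qed
    have "summable (\<lambda>n. a (n + n0) * (e / 2) ^ n)"
      using g_sums[of "e / 2"] \<open>e > 0\<close> by (auto simp: sums_iff)
    moreover have "norm (0::real) < norm (e / 2)"
      using \<open>e > 0\<close> by simp
    ultimately have "isCont g 0"
      unfolding g_def by (rule isCont_powser)
    moreover have "g 0 = a n0"
      unfolding g_def by simp
    ultimately have "\<forall>\<^sub>F h in at 0. g h \<noteq> 0"
      using \<open>a n0 \<noteq> 0\<close> tendsto_imp_eventually_ne by (metis isCont_def)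
    then obtain d where "d > 0" and d: "\<And>h. h \<noteq> 0 \<Longrightarrow> \<bar>h\<bar> < d \<Longrightarrow> g h \<noteq> 0"
      unfolding eventually_at by (auto simp: dist_real_def)
    have "\<forall>\<^sub>F y in at x. f y \<noteq> 0"
      unfolding eventually_at
    proof (intro exI[of _ "min e d"] conjI ballI impI)
      show "min e d > 0"
        using \<open>e > 0\<close> \<open>d > 0\<close> by simp
      fix y assume "y \<noteq> x \<and> dist y x < min e d"
      then have y: "y - x \<noteq> 0" "\<bar>y - x\<bar> < e" "\<bar>y - x\<bar> < d"
        by (simp_all add: dist_real_def)
      have "g (y - x) = f y / (y - x) ^ n0"
        using g_sums[OF y(2,1)] unfolding g_def by (simp add: sums_iff)
      then show "f y \<noteq> 0"
        using d[OF y(1,3)] by auto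
    qed
    then show ?thesis
      by blast
  qed
qed

lemma countable_zeros_real_analytic:
  assumes analytic: "\<forall>x\<in>{0<..<1}. real_analytic_at f x"
    and nonzero: "\<exists>x\<in>{0<..<1::real}. f x \<noteq> 0"
  shows "countable {x\<in>{0..1::real}. f x = 0}"
proof -
  define U :: "real set" where "U = {0<..<1}"
  define A where "A = {x\<in>U. \<forall>\<^sub>F y in nhds x. f y = 0}"
  have "open U" "connected U"
    by (simp_all add: U_def)
  have "A \<subseteq> U"
    by (auto simp: A_def)
  have zero_on_A: "f x = 0" if "x \<in> A" for x
  proof -
    have "\<forall>\<^sub>F y in nhds x. f y = 0"
      using that by (simp add: A_def)
    then show ?thesis
      by (rule eventually_nhds_x_imp_x)
  qed
  have "open A"
  proof (rule open_subopen[THEN iffD2], intro ballI)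
    fix x assume "x \<in> A"
    then have "\<forall>\<^sub>F y in nhds x. f y = 0"
      by (simp add: A_def)
    then obtain S where S: "open S" "x \<in> S" "\<forall>y\<in>S. f y = 0"
      unfolding eventually_nhds by blast
    have "S \<inter> U \<subseteq> A"
    proof
      fix z assume z: "z \<in> S \<inter> U"
      then have "\<forall>\<^sub>F y in nhds z. f y = 0"
        unfolding eventually_nhds using S by (intro exI[of _ S]) auto
      with z show "z \<in> A"
        by (simp add: A_def)
    qed
    moreover have "open (S \<inter> U)" "x \<in> S \<inter> U"
      using S \<open>x \<in> A\<close> \<open>open U\<close> \<open>A \<subseteq> U\<close> by auto
    ultimately show "\<exists>T. open T \<and> x \<in> T \<and> T \<subseteq> A"
      by blast
  qed
  have punctured: "\<forall>\<^sub>F y in at x. f y \<noteq> 0" if "x \<in> U - A" for x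
    using real_analytic_at_zero_dichotomy[of f x] analytic that by (simp add: A_def U_def)
  have "open (U - A)"
  proof (rule open_subopen[THEN iffD2], intro ballI)
    fix x assume x: "x \<in> U - A"
    obtain d where "d > 0" and d: "\<And>y. y \<noteq> x \<Longrightarrow> dist y x < d \<Longrightarrow> f y \<noteq> 0"
      using punctured[OF x] unfolding eventually_at by blast
    have "ball x d \<inter> U \<subseteq> U - A"
      using d x zero_on_A by (force simp: dist_commute)
    moreover have "open (ball x d \<inter> U)" "x \<in> ball x d \<inter> U"
      using x \<open>d > 0\<close> \<open>open U\<close> by auto
    ultimately show "\<exists>T. open T \<and> x \<in> T \<and> T \<subseteq> U - A"
      by blast
  qed
  have "A \<inter> U = {} \<or> (U - A) \<inter> U = {}"
    by (rule connectedD[OF \<open>connected U\<close> \<open>open A\<close> \<open>open (U - A)\<close>]) auto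
  moreover have "U \<noteq> A"
    using nonzero zero_on_A by (auto simp: U_def)
  ultimately have "A = {}"
    using \<open>A \<subseteq> U\<close> by blast
  then have "\<forall>x\<in>U. \<not> x islimpt {y. f y = 0}"
    using punctured by (simp add: islimpt_iff_eventually)
  then have "countable (U \<inter> {y. f y = 0})"
    using sparse_imp_countable[OF \<open>open U\<close>] sparse_in_open[OF \<open>open U\<close>] by blast
  then have "countable (insert 0 (insert 1 (U \<inter> {y. f y = 0})))"
    by simp
  then show ?thesis
    by (rule countable_subset[rotated]) (auto simp: U_def)
qed

section \<open>Completion of a banded matrix of bounded rank\<close>

definition block_mat :: "'a mat \<Rightarrow> nat \<Rightarrow> nat \<Rightarrow> nat \<Rightarrow> 'a mat" where
  "block_mat A a b n = mat n n (\<lambda>(x, y). A $$ (a + x, b + y))"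

lemma block_mat_carrier [simp]: "block_mat A a b n \<in> carrier_mat n n"
  and block_mat_dim [simp]: "dim_row (block_mat A a b n) = n" "dim_col (block_mat A a b n) = n"
  and block_mat_index [simp]: "x < n \<Longrightarrow> y < n \<Longrightarrow> block_mat A a b n $$ (x, y) = A $$ (a + x, b + y)"
  unfolding block_mat_def by simp_all

lemma mat_delete_block_mat_first_row_last_col:
  "mat_delete (block_mat A a b (Suc n)) 0 n = block_mat A (Suc a) b n"
  by (rule eq_matI) (auto simp: mat_delete_def)

lemma mat_delete_block_mat_last_row_first_col:
  "mat_delete (block_mat A a b (Suc n)) n 0 = block_mat A a (Suc b) n"
  by (rule eq_matI) (auto simp: mat_delete_def)

lemma pick_atLeastLessThan: "x < n \<Longrightarrow> pick {a..<a + n} x = a + x"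
  by (induction x) (auto intro!: Least_equality)

lemma block_mat_eq_submatrix:
  assumes "A \<in> carrier_mat K K" "a + n \<le> K" "b + n \<le> K"
  shows "block_mat A a b n = submatrix A {a..<a + n} {b..<b + n}"
proof -
  have "{i. i < dim_row A \<and> i \<in> {a..<a + n}} = {a..<a + n}"
    "{j. j < dim_col A \<and> j \<in> {b..<b + n}} = {b..<b + n}"
    using assms by auto
  then show ?thesis
    unfolding submatrix_def block_mat_def by (intro eq_matI) (auto simp: pick_atLeastLessThan)
qed

lemma rank_ge_if_block_det_nonzero:
  fixes A :: "'a::field mat"
  assumes A: "A \<in> carrier_mat K K" and block: "a + n \<le> K" "b + n \<le> K"
    and "det (block_mat A a b n) \<noteq> 0"
  shows "n \<le> vec_space.rank K A"
proof -
  have "det (submatrix A {a..<a + n} {b..<b + n}) \<noteq> 0"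
    using assms(4) unfolding block_mat_eq_submatrix[OF A block] .
  from vec_space.rank_gt_minor[OF A this]
  have "card {j. j < K \<and> j \<in> {b..<b + n}} \<le> vec_space.rank K A" .
  moreover have "{j. j < K \<and> j \<in> {b..<b + n}} = {b..<b + n}"
    using block by auto
  ultimately show ?thesis
    by (metis card_atLeastLessThan add_diff_cancel_left')
qed

lemma rank_sum_of_products_le:
  fixes f g :: "nat \<Rightarrow> nat \<Rightarrow> 'a::field"
  shows "vec_space.rank n (mat n nc (\<lambda>(j, l). \<Sum>k<q. f k j * g k l)) \<le> q"
proof (induction q)
  case 0
  have zero: "mat n nc (\<lambda>(j, l). \<Sum>k<0. f k j * g k l) = 0\<^sub>m n nc"
    by (rule eq_matI) auto
  show ?case
    unfolding zero by (simp add: vec_space.rank_0I)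
next
  case (Suc q)
  have "mat n nc (\<lambda>(j, l). \<Sum>k<Suc q. f k j * g k l) =
      mat n nc (\<lambda>(j, l). \<Sum>k<q. f k j * g k l) + mat n nc (\<lambda>(j, l). f q j * g q l)"
    by (rule eq_matI) auto
  moreover have "vec_space.rank n (mat n nc (\<lambda>(j, l). f q j * g q l)) \<le> 1"
    by (rule vec_space.rank_le_1_product_entries[of _ n nc "f q" "g q"]) auto
  ultimately show ?case
    using Suc vec_space.rank_subadditive[of "mat n nc (\<lambda>(j, l). \<Sum>k<q. f k j * g k l)" n nc
        "mat n nc (\<lambda>(j, l). f q j * g q l)"] by simp
qed

text \<open>Laplace expansion of two singular (q+1)\<times>(q+1) blocks along the row of an entry in which
  they may differ: the difference of the expansions is that difference times a cofactor.\<close>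
lemma block_entry_eq_if_rank_le:
  fixes \<theta> R :: "'a::field mat"
  assumes \<theta>: "\<theta> \<in> carrier_mat K K" and R: "R \<in> carrier_mat K K"
    and rank: "vec_space.rank K \<theta> \<le> q" "vec_space.rank K R \<le> q"
    and block: "a + Suc q \<le> K" "b + Suc q \<le> K"
    and corner: "x0 < Suc q" "y0 < Suc q"
    and agree: "\<And>x y. x < Suc q \<Longrightarrow> y < Suc q \<Longrightarrow> (x, y) \<noteq> (x0, y0) \<Longrightarrow>
                  \<theta> $$ (a + x, b + y) = R $$ (a + x, b + y)"
    and minor: "det (mat_delete (block_mat R a b (Suc q)) x0 y0) \<noteq> 0"
  shows "\<theta> $$ (a + x0, b + y0) = R $$ (a + x0, b + y0)"
proof -
  let ?X = "block_mat \<theta> a b (Suc q)" and ?Y = "block_mat R a b (Suc q)"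
  have singular: "det ?X = 0" "det ?Y = 0"
    using rank_ge_if_block_det_nonzero[OF \<theta> block] rank_ge_if_block_det_nonzero[OF R block] rank
    by force+
  have "mat_delete ?X x0 y = mat_delete ?Y x0 y" for y
    using agree by (intro eq_matI) (auto simp: mat_delete_def)
  then have same_cofactors: "cofactor ?X x0 y = cofactor ?Y x0 y" for y
    by (simp add: cofactor_def)
  have "0 = det ?X - det ?Y"
    using singular by simp
  also have "\<dots> = (\<Sum>y<Suc q. ?X $$ (x0, y) * cofactor ?Y x0 y) - (\<Sum>y<Suc q. ?Y $$ (x0, y) * cofactor ?Y x0 y)"
    using laplace_expansion_row[OF block_mat_carrier corner(1), of \<theta> a b]
      laplace_expansion_row[OF block_mat_carrier corner(1), of R a b]
    unfolding same_cofactors by (simp only:)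
  also have "\<dots> = (\<Sum>y<Suc q. (?X $$ (x0, y) - ?Y $$ (x0, y)) * cofactor ?Y x0 y)"
    by (simp only: sum_subtractf left_diff_distrib)
  also have "\<dots> = (\<Sum>y<Suc q. if y = y0 then (?X $$ (x0, y0) - ?Y $$ (x0, y0)) * cofactor ?Y x0 y0 else 0)"
    using corner agree by (intro sum.cong) auto
  also have "\<dots> = (?X $$ (x0, y0) - ?Y $$ (x0, y0)) * cofactor ?Y x0 y0"
    using corner by simp
  finally have "?X $$ (x0, y0) = ?Y $$ (x0, y0)"
    using minor by (simp add: cofactor_def)
  then show ?thesis
    using corner by simp
qed

text \<open>An entry at distance d \<ge> 2q from the diagonal is the far corner of a (q+1)\<times>(q+1) block of
  consecutive rows and columns all of whose other entries are closer to the diagonal; the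
  complementary minor is itself a q\<times>q block of consecutive rows and columns.\<close>
lemma band_completion_step:
  fixes \<theta> R :: "'a::field mat"
  assumes \<theta>: "\<theta> \<in> carrier_mat K K" and R: "R \<in> carrier_mat K K"
    and rank: "vec_space.rank K \<theta> \<le> q" "vec_space.rank K R \<le> q"
    and minors: "\<And>a b. a + q \<le> K \<Longrightarrow> b + q \<le> K \<Longrightarrow> det (block_mat R a b q) \<noteq> 0"
    and far: "2 * q \<le> d"
    and closer: "\<And>j l e. j < K \<Longrightarrow> l < K \<Longrightarrow> e < d \<Longrightarrow> l = j + e \<or> j = l + e \<Longrightarrow>
                   \<theta> $$ (j, l) = R $$ (j, l)"
    and jl: "j < K" "l < K" "l = j + d \<or> j = l + d"
  shows "\<theta> $$ (j, l) = R $$ (j, l)"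
  using jl(3)
proof
  assume l: "l = j + d"
  have "\<theta> $$ (j + 0, l - q + q) = R $$ (j + 0, l - q + q)"
  proof (rule block_entry_eq_if_rank_le[OF \<theta> R rank])
    show "j + Suc q \<le> K" "l - q + Suc q \<le> K"
      using l far jl by auto
    show "det (mat_delete (block_mat R j (l - q) (Suc q)) 0 q) \<noteq> 0"
      using minors l far jl by (simp add: mat_delete_block_mat_first_row_last_col)
    fix x y assume "x < Suc q" "y < Suc q" "(x, y) \<noteq> (0, q)"
    then show "\<theta> $$ (j + x, l - q + y) = R $$ (j + x, l - q + y)"
      using l far jl by (intro closer[where e = "d - q + y - x"] disjI1) auto
  qed auto
  then show ?thesis
    using l far by simp
next
  assume j: "j = l + d"
  have "\<theta> $$ (j - q + q, l + 0) = R $$ (j - q + q, l + 0)"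
  proof (rule block_entry_eq_if_rank_le[OF \<theta> R rank])
    show "j - q + Suc q \<le> K" "l + Suc q \<le> K"
      using j far jl by auto
    show "det (mat_delete (block_mat R (j - q) l (Suc q)) q 0) \<noteq> 0"
      using minors j far jl by (simp add: mat_delete_block_mat_last_row_first_col)
    fix x y assume "x < Suc q" "y < Suc q" "(x, y) \<noteq> (q, 0)"
    then show "\<theta> $$ (j - q + x, l + y) = R $$ (j - q + x, l + y)"
      using j far jl by (intro closer[where e = "d - q + x - y"] disjI2) auto
  qed auto
  then show ?thesis
    using j far by simp
qed

lemma band_completion_unique:
  fixes \<theta> R :: "'a::field mat"
  assumes \<theta>: "\<theta> \<in> carrier_mat K K" and R: "R \<in> carrier_mat K K"
    and rank: "vec_space.rank K \<theta> \<le> q" "vec_space.rank K R \<le> q"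
    and minors: "\<And>a b. a + q \<le> K \<Longrightarrow> b + q \<le> K \<Longrightarrow> det (block_mat R a b q) \<noteq> 0"
    and band: "\<And>j l. j < K \<Longrightarrow> l < K \<Longrightarrow> j < l + 2 * q \<Longrightarrow> l < j + 2 * q \<Longrightarrow>
                 \<theta> $$ (j, l) = R $$ (j, l)"
  shows "\<theta> = R"
proof -
  have entry: "\<theta> $$ (j, l) = R $$ (j, l)" if "j < K" "l < K" "l = j + d \<or> j = l + d" for j l d
    using that
  proof (induction d arbitrary: j l rule: less_induct)
    case (less d)
    show ?case
    proof (cases "d < 2 * q")
      case True
      then show ?thesis
        using band less.prems by auto
    next
      case False
      then show ?thesis
        using band_completion_step[OF \<theta> R rank minors _ less.IH less.prems] by simp
    qed
  qed
  show ?thesis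
  proof (rule eq_matI)
    fix j l assume "j < dim_row R" "l < dim_col R"
    then show "\<theta> $$ (j, l) = R $$ (j, l)"
      using entry[of j l "l - j"] entry[of j l "j - l"] R by (cases "j \<le> l") auto
  qed (use \<theta> R in auto)
qed

lemma tendsto_det:
  fixes X :: "'b \<Rightarrow> real mat"
  assumes "\<And>x. X x \<in> carrier_mat n n" "A \<in> carrier_mat n n"
    and entries: "\<And>i j. i < n \<Longrightarrow> j < n \<Longrightarrow> ((\<lambda>x. X x $$ (i, j)) \<longlongrightarrow> A $$ (i, j)) F"
  shows "((\<lambda>x. det (X x)) \<longlongrightarrow> det A) F"
  unfolding det_def'[OF assms(1)] det_def'[OF assms(2)]
proof (intro tendsto_sum tendsto_mult tendsto_const tendsto_prod)
  fix p i assume "p \<in> {p. p permutes {0..<n}}" "i \<in> {0..<n}"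
  then show "((\<lambda>x. X x $$ (i, p i)) \<longlongrightarrow> A $$ (i, p i)) F"
    using entries permutes_in_image[of p "{0..<n}" i] by auto
qed

text \<open>The determinant of the leading q\<times>q block is continuous in the entries, nonzero at R
  and zero at every matrix of rank below q.\<close>
lemma low_rank_leading_block_gap:
  fixes R :: "real mat"
  assumes R: "R \<in> carrier_mat K K" and "q \<le> K"
    and nonsingular: "det (block_mat R 0 0 q) \<noteq> 0"
  shows "\<exists>c>0. \<forall>\<theta>\<in>carrier_mat K K. vec_space.rank K \<theta> < q \<longrightarrow>
           c \<le> (\<Sum>x<q. \<Sum>y<q. (\<theta> $$ (x, y) - R $$ (x, y))\<^sup>2)"
proof (rule ccontr)
  define S where "S \<theta> = (\<Sum>x<q. \<Sum>y<q. (\<theta> $$ (x, y) - R $$ (x, y))\<^sup>2)" for \<theta> :: "real mat"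
  assume "\<not> ?thesis"
  moreover have "inverse (real (Suc n)) > 0" for n
    by simp
  ultimately have "\<forall>n. \<exists>\<theta>. \<theta> \<in> carrier_mat K K \<and> vec_space.rank K \<theta> < q \<and> S \<theta> < inverse (Suc n)"
    unfolding S_def by (meson not_le)
  then obtain \<theta> where \<theta>: "\<And>n. \<theta> n \<in> carrier_mat K K" "\<And>n. vec_space.rank K (\<theta> n) < q"
    and close: "\<And>n. S (\<theta> n) < inverse (Suc n)"
    by metis
  have "(\<lambda>n. \<theta> n $$ (x, y)) \<longlonglongrightarrow> R $$ (x, y)" if "x < q" "y < q" for x y
  proof -
    have le: "(\<theta> n $$ (x, y) - R $$ (x, y))\<^sup>2 \<le> S (\<theta> n)" for n
      unfolding S_def using that
      by (intro order.trans[OF member_le_sum member_le_sum[where i = x]]) (auto intro: sum_nonneg)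
    have "(\<theta> n $$ (x, y) - R $$ (x, y))\<^sup>2 \<le> inverse (Suc n)" for n
      using le[of n] close[of n] by linarith
    then have "(\<lambda>n. (\<theta> n $$ (x, y) - R $$ (x, y))\<^sup>2) \<longlonglongrightarrow> 0"
      by (intro tendsto_sandwich[OF _ _ tendsto_const LIMSEQ_inverse_real_of_nat]) auto
    from tendsto_real_sqrt[OF this] have "(\<lambda>n. \<bar>\<theta> n $$ (x, y) - R $$ (x, y)\<bar>) \<longlonglongrightarrow> 0"
      by simp
    then have "(\<lambda>n. \<theta> n $$ (x, y) - R $$ (x, y)) \<longlonglongrightarrow> 0"
      by (simp add: tendsto_rabs_zero_iff)
    then show ?thesis
      by (simp add: LIM_zero_iff)
  qed
  then have "(\<lambda>n. det (block_mat (\<theta> n) 0 0 q)) \<longlonglongrightarrow> det (block_mat R 0 0 q)"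
    by (intro tendsto_det) auto
  moreover have "det (block_mat (\<theta> n) 0 0 q) = 0" for n
  proof (rule ccontr)
    assume "det (block_mat (\<theta> n) 0 0 q) \<noteq> 0"
    from rank_ge_if_block_det_nonzero[OF \<theta>(1) _ _ this] have "q \<le> vec_space.rank K (\<theta> n)"
      using \<open>q \<le> K\<close> by simp
    with \<theta>(2)[of n] show False
      by simp
  qed
  ultimately have "det (block_mat R 0 0 q) = 0"
    by (simp add: LIMSEQ_const_iff)
  with nonsingular show False
    by contradiction
qed

section \<open>Masked rank minimization\<close>

lemma band_mask_inside_band:
  assumes "2 * int q < \<lfloor>real K * \<delta>\<rfloor>" "j < l + 2 * q" "l < j + 2 * q"
  shows "band_mask K \<delta> j l = 1"
  using assms unfolding band_mask_def by auto

lemma masked_frob_sq_nonneg: "0 \<le> masked_frob_sq K \<delta> A B"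
  unfolding masked_frob_sq_def by (intro sum_nonneg) auto

lemma masked_frob_sq_eq_0_iff:
  "masked_frob_sq K \<delta> A B = 0 \<longleftrightarrow>
     (\<forall>j<K. \<forall>l<K. band_mask K \<delta> j l * (A $$ (j, l) - B $$ (j, l)) = 0)"
  unfolding masked_frob_sq_def by (simp add: sum_nonneg_eq_0_iff sum_nonneg Ball_def)

lemma leading_block_le_masked_frob_sq:
  assumes "2 * int q < \<lfloor>real K * \<delta>\<rfloor>" "q \<le> K"
  shows "(\<Sum>x<q. \<Sum>y<q. (\<theta> $$ (x, y) - R $$ (x, y))\<^sup>2) \<le> masked_frob_sq K \<delta> R \<theta>"
proof -
  define f where "f j l = (band_mask K \<delta> j l * (R $$ (j, l) - \<theta> $$ (j, l)))\<^sup>2" for j l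
  have "(\<Sum>x<q. \<Sum>y<q. (\<theta> $$ (x, y) - R $$ (x, y))\<^sup>2) = (\<Sum>x<q. \<Sum>y<q. f x y)"
    using assms(1) by (intro sum.cong refl) (simp add: f_def band_mask_inside_band power2_commute)
  also have "\<dots> \<le> (\<Sum>x<K. \<Sum>y<K. f x y)"
    using \<open>q \<le> K\<close> by (intro order.trans[OF sum_mono sum_mono2] sum_mono2) (auto simp: f_def intro: sum_nonneg)
  finally show ?thesis
    unfolding masked_frob_sq_def f_def .
qed

lemma masked_completion_rank_gt:
  fixes R \<theta> :: "real mat"
  assumes R: "R \<in> carrier_mat K K" and \<theta>: "\<theta> \<in> carrier_mat K K"
    and rank: "mrank K R \<le> q"
    and minors: "\<And>a b. a + q \<le> K \<Longrightarrow> b + q \<le> K \<Longrightarrow> det (block_mat R a b q) \<noteq> 0"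
    and band: "2 * int q < \<lfloor>real K * \<delta>\<rfloor>"
    and "masked_frob_sq K \<delta> R \<theta> = 0" "\<theta> \<noteq> R"
  shows "mrank K R < mrank K \<theta>"
proof (rule ccontr)
  assume "\<not> ?thesis"
  then have "vec_space.rank K \<theta> \<le> q"
    using rank unfolding mrank_def by linarith
  moreover have "\<theta> $$ (j, l) = R $$ (j, l)"
    if "j < K" "l < K" "j < l + 2 * q" "l < j + 2 * q" for j l
  proof -
    have "band_mask K \<delta> j l * (R $$ (j, l) - \<theta> $$ (j, l)) = 0"
      using \<open>masked_frob_sq K \<delta> R \<theta> = 0\<close> that(1,2) unfolding masked_frob_sq_eq_0_iff by blast
    then show ?thesis
      using band_mask_inside_band[OF band that(3,4)] by simp
  qed
  ultimately have "\<theta> = R"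
    using band_completion_unique[OF \<theta> R _ _ minors] rank unfolding mrank_def by blast
  with \<open>\<theta> \<noteq> R\<close> show False
    by contradiction
qed

lemma penalized_rank_minimizer:
  fixes R :: "real mat"
  assumes "0 < K" and rank: "mrank K R \<le> q"
    and exact: "\<And>\<theta>. \<theta> \<in> carrier_mat K K \<Longrightarrow> masked_frob_sq K \<delta> R \<theta> = 0 \<Longrightarrow> \<theta> \<noteq> R \<Longrightarrow>
                  mrank K R < mrank K \<theta>"
    and "c > 0"
    and gap: "\<And>\<theta>. \<theta> \<in> carrier_mat K K \<Longrightarrow> mrank K \<theta> < q \<Longrightarrow> c \<le> masked_frob_sq K \<delta> R \<theta>"
  shows "\<exists>\<tau>0 > 0. \<forall>\<tau>. 0 < \<tau> \<and> \<tau> < \<tau>0 \<longrightarrow>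
           (\<forall>\<theta> \<in> carrier_mat K K. \<theta> \<noteq> R \<longrightarrow>
              masked_frob_sq K \<delta> R R / (real K)\<^sup>2 + \<tau> * real (mrank K R)
              < masked_frob_sq K \<delta> R \<theta> / (real K)\<^sup>2 + \<tau> * real (mrank K \<theta>))"
proof (intro exI[of _ "c / ((real K)\<^sup>2 * (real q + 1))"] conjI allI impI ballI)
  show "c / ((real K)\<^sup>2 * (real q + 1)) > 0"
    using \<open>c > 0\<close> \<open>0 < K\<close> by simp
  fix \<tau> \<theta> assume \<tau>: "0 < \<tau> \<and> \<tau> < c / ((real K)\<^sup>2 * (real q + 1))"
    and \<theta>: "\<theta> \<in> carrier_mat K K" "\<theta> \<noteq> R"
  have RR: "masked_frob_sq K \<delta> R R = 0"
    by (simp add: masked_frob_sq_def)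
  show "masked_frob_sq K \<delta> R R / (real K)\<^sup>2 + \<tau> * real (mrank K R)
          < masked_frob_sq K \<delta> R \<theta> / (real K)\<^sup>2 + \<tau> * real (mrank K \<theta>)"
  proof (cases "mrank K \<theta> < mrank K R")
    case True
    have "\<tau> * real (mrank K R) \<le> \<tau> * real q"
      using rank \<tau> by simp
    also have "\<dots> < \<tau> * (real q + 1)"
      using \<tau> by simp
    also have "\<dots> < c / (real K)\<^sup>2"
    proof -
      have "\<tau> * ((real K)\<^sup>2 * (real q + 1)) < c"
        using \<tau> \<open>0 < K\<close> by (simp add: pos_less_divide_eq)
      then show ?thesis
        using \<open>0 < K\<close> by (simp add: pos_less_divide_eq mult_ac)
    qed
    also have "\<dots> \<le> masked_frob_sq K \<delta> R \<theta> / (real K)\<^sup>2"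
      using gap[OF \<theta>(1)] True rank by (simp add: divide_right_mono)
    finally have "\<tau> * real (mrank K R) < masked_frob_sq K \<delta> R \<theta> / (real K)\<^sup>2" .
    moreover have "0 \<le> \<tau> * real (mrank K \<theta>)"
      using \<tau> by simp
    ultimately show ?thesis
      by (simp add: RR)
  next
    case False
    then have "\<tau> * real (mrank K R) \<le> \<tau> * real (mrank K \<theta>)"
      using \<tau> by simp
    moreover have "masked_frob_sq K \<delta> R \<theta> = 0 \<Longrightarrow> \<tau> * real (mrank K R) < \<tau> * real (mrank K \<theta>)"
      using exact[OF \<theta>(1) _ \<theta>(2)] \<tau> by simp
    ultimately show ?thesis
      using RR masked_frob_sq_nonneg[of K \<delta> R \<theta>] \<open>0 < K\<close>
      by (cases "masked_frob_sq K \<delta> R \<theta> = 0") (auto simp: add_strict_increasing)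
  qed
qed

lemma masked_rank_recovery:
  fixes R :: "real mat"
  assumes R: "R \<in> carrier_mat K K" and rank: "mrank K R \<le> q"
    and minors: "\<And>a b. a + q \<le> K \<Longrightarrow> b + q \<le> K \<Longrightarrow> det (block_mat R a b q) \<noteq> 0"
    and "q \<le> K" "0 < K"
    and band: "2 * int q < \<lfloor>real K * \<delta>\<rfloor>"
  shows "(\<forall>\<theta> \<in> carrier_mat K K.
            masked_frob_sq K \<delta> R \<theta> = 0 \<longrightarrow> \<theta> \<noteq> R \<longrightarrow> mrank K R < mrank K \<theta>)
         \<and> (\<exists>\<tau>0 > 0. \<forall>\<tau>. 0 < \<tau> \<and> \<tau> < \<tau>0 \<longrightarrow>
            (\<forall>\<theta> \<in> carrier_mat K K. \<theta> \<noteq> R \<longrightarrow>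
               masked_frob_sq K \<delta> R R / (real K)\<^sup>2 + \<tau> * real (mrank K R)
               < masked_frob_sq K \<delta> R \<theta> / (real K)\<^sup>2 + \<tau> * real (mrank K \<theta>)))"
proof -
  obtain c where "c > 0" and c: "\<And>\<theta>. \<theta> \<in> carrier_mat K K \<Longrightarrow> vec_space.rank K \<theta> < q \<Longrightarrow>
      c \<le> (\<Sum>x<q. \<Sum>y<q. (\<theta> $$ (x, y) - R $$ (x, y))\<^sup>2)"
    using low_rank_leading_block_gap[OF R \<open>q \<le> K\<close> minors] \<open>q \<le> K\<close> by auto
  have exact: "\<forall>\<theta> \<in> carrier_mat K K. masked_frob_sq K \<delta> R \<theta> = 0 \<longrightarrow> \<theta> \<noteq> R \<longrightarrow> mrank K R < mrank K \<theta>"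
    using masked_completion_rank_gt[OF R _ rank minors band] by blast
  moreover have "c \<le> masked_frob_sq K \<delta> R \<theta>" if "\<theta> \<in> carrier_mat K K" "mrank K \<theta> < q" for \<theta>
    using c[OF that(1)] that(2) leading_block_le_masked_frob_sq[OF band \<open>q \<le> K\<close>, of \<theta> R]
    unfolding mrank_def by linarith
  ultimately show ?thesis
    using penalized_rank_minimizer[OF \<open>0 < K\<close> rank _ \<open>c > 0\<close>] by blast
qed

section \<open>Kernel matrices and sample matrices\<close>

definition sample_mat :: "(nat \<Rightarrow> real \<Rightarrow> real) \<Rightarrow> nat \<Rightarrow> (nat \<Rightarrow> real) \<Rightarrow> nat \<Rightarrow> real mat" where
  "sample_mat \<phi> m t a = mat m m (\<lambda>(i, k). \<phi> k (t (a + i)))"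

lemma sample_mat_carrier [simp]: "sample_mat \<phi> m t a \<in> carrier_mat m m"
  and sample_mat_dim [simp]: "dim_row (sample_mat \<phi> m t a) = m" "dim_col (sample_mat \<phi> m t a) = m"
  and sample_mat_index [simp]: "i < m \<Longrightarrow> k < m \<Longrightarrow> sample_mat \<phi> m t a $$ (i, k) = \<phi> k (t (a + i))"
  unfolding sample_mat_def by simp_all

lemma sample_mat_cong:
  assumes "\<And>i k. i < m \<Longrightarrow> k < m \<Longrightarrow> \<phi> k (t (a + i)) = \<psi> k (t' (a + i))"
  shows "sample_mat \<phi> m t a = sample_mat \<psi> m t' a"
  using assms by (intro eq_matI) auto

lemma det_mat_diag: "det (mat_diag n f) = (\<Prod>i<n. f i)"
proof -
  have "upper_triangular (mat_diag n f)"
    by (auto simp: upper_triangular_def mat_diag_def)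
  then have "det (mat_diag n f) = prod_list (diag_mat (mat_diag n f))"
    by (rule det_upper_triangular[of _ n]) simp
  also have "\<dots> = (\<Prod>i<n. f i)"
    by (simp add: diag_mat_def mat_diag_def prod.list_conv_set_nth lessThan_atLeast0)
  finally show ?thesis .
qed

lemma kernel_mat_eq_sum:
  assumes mercer: "\<forall>s\<in>{0..1}. \<forall>t\<in>{0..1}. r s t = (\<Sum>j<q. lam j * \<phi> j s * \<phi> j t)"
    and box: "\<forall>j<K. t j \<in> {0..1}"
  shows "kernel_mat r K t = mat K K (\<lambda>(j, l). \<Sum>k<q. (lam k * \<phi> k (t j)) * \<phi> k (t l))"
  unfolding kernel_mat_def using mercer box by (intro eq_matI) auto

lemma rank_kernel_mat_le:
  assumes "\<forall>s\<in>{0..1}. \<forall>t\<in>{0..1}. r s t = (\<Sum>j<q. lam j * \<phi> j s * \<phi> j t)"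
    and "\<forall>j<K. t j \<in> {0..1}"
  shows "vec_space.rank K (kernel_mat r K t) \<le> q"
  unfolding kernel_mat_eq_sum[OF assms] by (rule rank_sum_of_products_le)

lemma block_kernel_mat_factor:
  assumes mercer: "\<forall>s\<in>{0..1}. \<forall>t\<in>{0..1}. r s t = (\<Sum>j<q. lam j * \<phi> j s * \<phi> j t)"
    and box: "\<forall>j<K. t j \<in> {0..1}" and block: "a + q \<le> K" "b + q \<le> K"
  shows "block_mat (kernel_mat r K t) a b q =
           sample_mat \<phi> q t a * mat_diag q lam * transpose_mat (sample_mat \<phi> q t b)"
proof (rule eq_matI)
  fix x y assume "x < dim_row (sample_mat \<phi> q t a * mat_diag q lam * transpose_mat (sample_mat \<phi> q t b))"
    "y < dim_col (sample_mat \<phi> q t a * mat_diag q lam * transpose_mat (sample_mat \<phi> q t b))"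
  then have xy: "x < q" "y < q"
    by auto
  have "block_mat (kernel_mat r K t) a b q $$ (x, y) = (\<Sum>k<q. lam k * \<phi> k (t (a + x)) * \<phi> k (t (b + y)))"
    using xy block box mercer by (simp add: kernel_mat_def)
  also have "\<dots> = (sample_mat \<phi> q t a * mat_diag q lam * transpose_mat (sample_mat \<phi> q t b)) $$ (x, y)"
    using xy by (simp add: mat_diag_mult_right[of _ q] scalar_prod_def lessThan_atLeast0 ac_simps)
  finally show "block_mat (kernel_mat r K t) a b q $$ (x, y) =
      (sample_mat \<phi> q t a * mat_diag q lam * transpose_mat (sample_mat \<phi> q t b)) $$ (x, y)" .
qed auto

lemma det_block_kernel_mat_nonzero:
  assumes mercer: "\<forall>s\<in>{0..1}. \<forall>t\<in>{0..1}. r s t = (\<Sum>j<q. lam j * \<phi> j s * \<phi> j t)"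
    and lam: "\<forall>j<q. lam j \<noteq> 0"
    and box: "\<forall>j<K. t j \<in> {0..1}" and block: "a + q \<le> K" "b + q \<le> K"
    and nonsingular: "det (sample_mat \<phi> q t a) \<noteq> 0" "det (sample_mat \<phi> q t b) \<noteq> 0"
  shows "det (block_mat (kernel_mat r K t) a b q) \<noteq> 0"
proof -
  let ?A = "sample_mat \<phi> q t a" and ?B = "sample_mat \<phi> q t b" and ?D = "mat_diag q lam"
  have "det (block_mat (kernel_mat r K t) a b q) = det (?A * ?D) * det (transpose_mat ?B)"
    unfolding block_kernel_mat_factor[OF mercer box block]
    by (rule det_mult[of _ q]) (auto intro: mult_carrier_mat[of _ q q])
  also have "\<dots> = det ?A * (\<Prod>i<q. lam i) * det ?B"
    by (simp add: det_mult[of ?A q ?D] det_transpose[of ?B q] det_mat_diag)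
  finally show ?thesis
    using lam nonsingular by simp
qed

section \<open>Sample matrices at generic grids\<close>

lemma det_sample_mat_Suc_update:
  "det (sample_mat \<psi> (Suc m) (t(a + m := y)) a) =
     (\<Sum>k\<le>m. cofactor (sample_mat \<psi> (Suc m) t a) m k * \<psi> k y)"
proof -
  have "mat_delete (sample_mat \<psi> (Suc m) (t(a + m := y)) a) m k = mat_delete (sample_mat \<psi> (Suc m) t a) m k" for k
    by (intro eq_matI) (auto simp: mat_delete_def)
  then have "cofactor (sample_mat \<psi> (Suc m) (t(a + m := y)) a) m k = cofactor (sample_mat \<psi> (Suc m) t a) m k" for k
    by (simp add: cofactor_def)
  then show ?thesis
    by (subst laplace_expansion_row[of _ "Suc m" m]) (auto simp: lessThan_Suc_atMost mult.commute)
qed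

lemma det_sample_mat_update_last: "det (sample_mat \<psi> m (t(a + m := y)) a) = det (sample_mat \<psi> m t a)"
  by (intro arg_cong[where f = det] sample_mat_cong) auto

lemma cofactor_sample_mat_last:
  "cofactor (sample_mat \<psi> (Suc m) t a) m m = det (sample_mat \<psi> m t a)"
proof -
  have "mat_delete (sample_mat \<psi> (Suc m) t a) m m = sample_mat \<psi> m t a"
    by (intro eq_matI) (auto simp: mat_delete_def)
  then show ?thesis
    by (simp add: cofactor_def flip: mult_2)
qed

lemma borel_measurable_det_sample_mat:
  assumes "\<And>k. k < m \<Longrightarrow> \<psi> k \<in> borel_measurable borel" and "a + m \<le> K"
  shows "(\<lambda>t. det (sample_mat \<psi> m t a)) \<in> borel_measurable (PiM {..<K} (\<lambda>_. lborel))"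
  unfolding det_def'[OF sample_mat_carrier]
proof (intro borel_measurable_sum borel_measurable_times borel_measurable_const borel_measurable_prod)
  fix p i assume p: "p \<in> {p. p permutes {0..<m}}" and i: "i \<in> {0..<m}"
  then have "p i < m"
    using permutes_in_image[of p "{0..<m}" i] by auto
  have "(\<lambda>t. t (a + i)) \<in> borel_measurable (PiM {..<K} (\<lambda>_. lborel))"
    using measurable_component_singleton[of "a + i" "{..<K}" "\<lambda>_. lborel"] i assms(2) by simp
  from measurable_compose[OF this assms(1)[OF \<open>p i < m\<close>]]
  show "(\<lambda>t. sample_mat \<psi> m t a $$ (i, p i)) \<in> borel_measurable (PiM {..<K} (\<lambda>_. lborel))"
    using i \<open>p i < m\<close> by simp
qed

lemma (in product_sigma_finite) null_sets_PiM_insert: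
  assumes "finite I" "i \<notin> I" and N: "N \<in> sets (Pi\<^sub>M (insert i I) M)"
    and slices: "\<And>x. x \<in> space (Pi\<^sub>M I M) \<Longrightarrow> AE y in M i. x(i := y) \<notin> N"
  shows "N \<in> null_sets (Pi\<^sub>M (insert i I) M)"
proof -
  have "emeasure (Pi\<^sub>M (insert i I) M) N = (\<integral>\<^sup>+ t. indicator N t \<partial>Pi\<^sub>M (insert i I) M)"
    using N by simp
  also have "\<dots> = (\<integral>\<^sup>+ x. (\<integral>\<^sup>+ y. indicator N (x(i := y)) \<partial>M i) \<partial>Pi\<^sub>M I M)"
    using assms by (intro product_nn_integral_insert) auto
  also have "\<dots> = (\<integral>\<^sup>+ x. 0 \<partial>Pi\<^sub>M I M)"
  proof (intro nn_integral_cong)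
    fix x assume "x \<in> space (Pi\<^sub>M I M)"
    from slices[OF this] have "AE y in M i. indicator N (x(i := y)) = (0::ennreal)"
      by (rule eventually_mono) simp
    then show "(\<integral>\<^sup>+ y. indicator N (x(i := y)) \<partial>M i) = 0"
      by (simp add: nn_integral_cong_AE)
  qed
  finally show ?thesis
    using N by (simp add: null_sets_def)
qed

text \<open>With all sample points but t (a + m) = y fixed, the determinant is the linear combination
  \<Sum>k\<le>m. c k * \<psi> k y whose top coefficient c m is the previous determinant.\<close>
lemma AE_det_sample_mat_Suc_nonzero:
  fixes \<psi> :: "nat \<Rightarrow> real \<Rightarrow> real"
  assumes meas: "\<And>k. k \<le> m \<Longrightarrow> \<psi> k \<in> borel_measurable borel"
    and S: "S \<in> sets borel"
    and independent: "\<And>c. c m \<noteq> 0 \<Longrightarrow> {y\<in>S. (\<Sum>k\<le>m. c k * \<psi> k y) = 0} \<in> null_sets lborel"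
    and "a + m < K"
  shows "AE t in PiM {..<K} (\<lambda>_. lborel). (\<forall>j<K. t j \<in> S) \<longrightarrow>
           det (sample_mat \<psi> m t a) \<noteq> 0 \<longrightarrow> det (sample_mat \<psi> (Suc m) t a) \<noteq> 0"
proof -
  let ?M = "PiM {..<K} (\<lambda>_. lborel :: real measure)"
  define i where "i = a + m"
  define N where "N = {t \<in> space ?M. (\<forall>j<K. t j \<in> S) \<and>
                    det (sample_mat \<psi> m t a) \<noteq> 0 \<and> det (sample_mat \<psi> (Suc m) t a) = 0}"
  have [measurable]: "(\<lambda>t. det (sample_mat \<psi> m t a)) \<in> borel_measurable ?M"
      "(\<lambda>t. det (sample_mat \<psi> (Suc m) t a)) \<in> borel_measurable ?M"
    by (rule borel_measurable_det_sample_mat; use meas \<open>a + m < K\<close> in simp)+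
  have "N = (\<Pi>\<^sub>E j\<in>{..<K}. S) \<inter> {t \<in> space ?M. det (sample_mat \<psi> m t a) \<noteq> 0 \<and> det (sample_mat \<psi> (Suc m) t a) = 0}"
    by (auto simp: N_def space_PiM PiE_def Pi_def)
  also have "\<dots> \<in> sets ?M"
    using S by measurable
  finally have "N \<in> sets ?M" .
  have slice: "AE y in lborel. x(i := y) \<notin> N" for x
  proof -
    define c where "c k = cofactor (sample_mat \<psi> (Suc m) x a) m k" for k
    have det_m: "det (sample_mat \<psi> m (x(i := y)) a) = c m" for y
      unfolding c_def cofactor_sample_mat_last i_def by (rule det_sample_mat_update_last)
    have det_Suc: "det (sample_mat \<psi> (Suc m) (x(i := y)) a) = (\<Sum>k\<le>m. c k * \<psi> k y)" for y
      unfolding c_def i_def by (rule det_sample_mat_Suc_update)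
    have "y \<in> S \<and> c m \<noteq> 0 \<and> (\<Sum>k\<le>m. c k * \<psi> k y) = 0" if "x(i := y) \<in> N" for y
    proof -
      have "(x(i := y)) i \<in> S"
        using that \<open>a + m < K\<close> unfolding N_def i_def by blast
      moreover have "det (sample_mat \<psi> m (x(i := y)) a) \<noteq> 0" "det (sample_mat \<psi> (Suc m) (x(i := y)) a) = 0"
        using that by (simp_all add: N_def)
      ultimately show ?thesis
        by (simp add: det_m det_Suc)
    qed
    then have "{y. x(i := y) \<in> N} \<subseteq> (if c m = 0 then {} else {y\<in>S. (\<Sum>k\<le>m. c k * \<psi> k y) = 0})"
      by auto
    moreover have "(if c m = 0 then {} else {y\<in>S. (\<Sum>k\<le>m. c k * \<psi> k y) = 0}) \<in> null_sets lborel"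
      using independent by simp
    ultimately show ?thesis
      by (auto intro: AE_I')
  qed
  interpret product_sigma_finite "\<lambda>_. lborel :: real measure"
    by standard
  have "{..<K} = insert i ({..<K} - {i})"
    using \<open>a + m < K\<close> by (auto simp: i_def)
  then have "N \<in> null_sets ?M"
    using null_sets_PiM_insert[of "{..<K} - {i}" i N] \<open>N \<in> sets ?M\<close> slice by simp
  then show ?thesis
    by (rule AE_I') (auto simp: N_def)
qed

lemma AE_det_sample_mat_nonzero:
  fixes \<psi> :: "nat \<Rightarrow> real \<Rightarrow> real"
  assumes meas: "\<And>k. k < m \<Longrightarrow> \<psi> k \<in> borel_measurable borel"
    and S: "S \<in> sets borel"
    and independent: "\<And>c n. n < m \<Longrightarrow> c n \<noteq> 0 \<Longrightarrow> {y\<in>S. (\<Sum>k\<le>n. c k * \<psi> k y) = 0} \<in> null_sets lborel"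
    and "a + m \<le> K"
  shows "AE t in PiM {..<K} (\<lambda>_. lborel). (\<forall>j<K. t j \<in> S) \<longrightarrow> det (sample_mat \<psi> m t a) \<noteq> 0"
proof -
  have "AE t in PiM {..<K} (\<lambda>_. lborel). (\<forall>j<K. t j \<in> S) \<longrightarrow> det (sample_mat \<psi> n t a) \<noteq> 0"
    if "n \<le> m" for n
    using that
  proof (induction n)
    case 0
    have "sample_mat \<psi> 0 t a = 1\<^sub>m 0" for t
      by (rule eq_matI) auto
    then show ?case
      by simp
  next
    case (Suc n)
    then have "AE t in PiM {..<K} (\<lambda>_. lborel). (\<forall>j<K. t j \<in> S) \<longrightarrow> det (sample_mat \<psi> n t a) \<noteq> 0"
      by simp
    moreover have "AE t in PiM {..<K} (\<lambda>_. lborel). (\<forall>j<K. t j \<in> S) \<longrightarrow>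
           det (sample_mat \<psi> n t a) \<noteq> 0 \<longrightarrow> det (sample_mat \<psi> (Suc n) t a) \<noteq> 0"
      using Suc.prems \<open>a + m \<le> K\<close> by (intro AE_det_sample_mat_Suc_nonzero meas S independent) auto
    ultimately show ?case
      by eventually_elim auto
  qed
  then show ?thesis
    by blast
qed

lemma borel_measurable_restrict_real_analytic:
  assumes "\<forall>x\<in>{0<..<1}. real_analytic_at f x"
  shows "(\<lambda>y. if y \<in> {0..1} then f y else 0) \<in> borel_measurable borel"
proof -
  have "continuous_on {0<..<1} f"
    using assms real_analytic_at_imp_isCont by (intro continuous_at_imp_continuous_on) blast
  from borel_measurable_continuous_on_indicator[OF _ this]
  have [measurable]: "(\<lambda>y. indicator {0<..<1} y * f y) \<in> borel_measurable borel"
    by simp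
  have restrict_eq: "(\<lambda>y. if y \<in> {0..1} then f y else 0) =
      (\<lambda>y. indicator {0<..<1} y * f y + indicator {0} y * f 0 + indicator {1} y * f 1)"
    by (rule ext) (auto simp: indicator_def)
  show ?thesis
    unfolding restrict_eq by measurable
qed

lemma orthonormal_sum_not_identically_zero:
  fixes \<phi> :: "nat \<Rightarrow> real \<Rightarrow> real"
  assumes orthonormal: "\<forall>i<q. \<forall>j<q. ((\<lambda>t. \<phi> i t * \<phi> j t) has_integral (if i = j then 1 else 0)) {0..1}"
    and "m < q" "c m \<noteq> 0"
  shows "\<exists>x\<in>{0<..<1}. (\<Sum>k\<le>m. c k * \<phi> k x) \<noteq> 0"
proof (rule ccontr)
  assume "\<not> ?thesis"
  then have vanish: "(\<Sum>k\<le>m. c k * (\<phi> k x * \<phi> m x)) = 0" if "x \<in> {0..1} - {0, 1}" for x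
    using that by (auto simp: sum_distrib_right[symmetric] mult.assoc[symmetric])
  have integral: "((\<lambda>x. \<Sum>k\<le>m. c k * (\<phi> k x * \<phi> m x)) has_integral (\<Sum>k\<le>m. c k * (if k = m then 1 else 0))) {0..1}"
    using orthonormal \<open>m < q\<close> by (intro has_integral_sum has_integral_mult_right) auto
  have coefficient: "(\<Sum>k\<le>m. c k * (if k = m then 1 else 0)) = c m"
    by (simp add: if_distrib cong: if_cong)
  have "((\<lambda>x. \<Sum>k\<le>m. c k * (\<phi> k x * \<phi> m x)) has_integral 0) {0..1}"
  proof (rule has_integral_spike_finite[where S = "{0, 1}" and f = "\<lambda>_. 0"])
    show "finite {0, 1::real}" "((\<lambda>_. 0) has_integral 0) {0..1::real}"
      by simp_all
  qed (rule vanish)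
  then have "c m = 0"
    using has_integral_unique[OF integral] coefficient by simp
  with \<open>c m \<noteq> 0\<close> show False
    by contradiction
qed

lemma null_zeros_orthonormal_real_analytic:
  fixes \<phi> :: "nat \<Rightarrow> real \<Rightarrow> real" and c :: "nat \<Rightarrow> real"
  assumes orthonormal: "\<forall>i<q. \<forall>j<q. ((\<lambda>t. \<phi> i t * \<phi> j t) has_integral (if i = j then 1 else 0)) {0..1}"
    and analytic: "\<forall>j<q. \<forall>x\<in>{0<..<1}. real_analytic_at (\<phi> j) x"
    and "n < q" "c n \<noteq> 0"
  shows "{y\<in>{0..1}. (\<Sum>k\<le>n. c k * \<phi> k y) = 0} \<in> null_sets lborel"
proof -
  have "\<forall>x\<in>{0<..<1}. real_analytic_at (\<lambda>y. \<Sum>k\<le>n. c k * \<phi> k y) x"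
    using analytic \<open>n < q\<close> by (auto intro!: real_analytic_at_sum real_analytic_at_cmult)
  moreover have "\<exists>x\<in>{0<..<1}. (\<Sum>k\<le>n. c k * \<phi> k x) \<noteq> 0"
    by (rule orthonormal_sum_not_identically_zero[where c = c, OF orthonormal \<open>n < q\<close> \<open>c n \<noteq> 0\<close>])
  ultimately show ?thesis
    by (intro countable_imp_null_set_lborel countable_zeros_real_analytic)
qed

text \<open>The eigenfunctions need not be measurable outside [0, 1], so the genericity argument is
  applied to their restrictions.\<close>
lemma AE_det_sample_mat_orthonormal_nonzero:
  fixes \<phi> :: "nat \<Rightarrow> real \<Rightarrow> real"
  assumes orthonormal: "\<forall>i<q. \<forall>j<q. ((\<lambda>t. \<phi> i t * \<phi> j t) has_integral (if i = j then 1 else 0)) {0..1}"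
    and analytic: "\<forall>j<q. \<forall>x\<in>{0<..<1}. real_analytic_at (\<phi> j) x"
    and "a + q \<le> K"
  shows "AE t in PiM {..<K} (\<lambda>_. lborel). (\<forall>j<K. t j \<in> {0..1}) \<longrightarrow> det (sample_mat \<phi> q t a) \<noteq> 0"
proof -
  define \<psi> where "\<psi> k y = (if y \<in> {0..1} then \<phi> k y else 0)" for k y
  have "AE t in PiM {..<K} (\<lambda>_. lborel). (\<forall>j<K. t j \<in> {0..1}) \<longrightarrow> det (sample_mat \<psi> q t a) \<noteq> 0"
  proof (rule AE_det_sample_mat_nonzero[OF _ _ _ \<open>a + q \<le> K\<close>])
    show "\<psi> k \<in> borel_measurable borel" if "k < q" for k
      unfolding \<psi>_def using borel_measurable_restrict_real_analytic analytic that by blast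
    fix c :: "nat \<Rightarrow> real" and n assume "n < q" "c n \<noteq> 0"
    moreover have "{y\<in>{0..1}. (\<Sum>k\<le>n. c k * \<psi> k y) = 0} = {y\<in>{0..1}. (\<Sum>k\<le>n. c k * \<phi> k y) = 0}"
      by (auto simp: \<psi>_def)
    ultimately show "{y\<in>{0..1}. (\<Sum>k\<le>n. c k * \<psi> k y) = 0} \<in> null_sets lborel"
      using null_zeros_orthonormal_real_analytic[OF orthonormal analytic] by simp
  qed simp
  moreover have "sample_mat \<psi> q t a = sample_mat \<phi> q t a" if "\<forall>j<K. t j \<in> {0..1}" for t
    using that \<open>a + q \<le> K\<close> by (intro sample_mat_cong) (simp add: \<psi>_def)
  ultimately show ?thesis
    by (auto elim: AE_mp)
qed

lemma grid_set_unit_interval: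
  assumes "t \<in> grid_set K" "j < K"
  shows "t j \<in> {0..1}"
proof -
  have "real j / real K \<le> t j" "t j \<le> (real j + 1) / real K"
    using assms unfolding grid_set_def by auto
  moreover have "(real j + 1) / real K \<le> 1"
    using assms(2) by (simp add: divide_le_eq)
  ultimately show ?thesis
    by (auto intro: order.trans[rotated])
qed

theorem proposition2:
  fixes q K :: nat and lam :: "nat \<Rightarrow> real" and \<phi> :: "nat \<Rightarrow> real \<Rightarrow> real"
    and r :: "real \<Rightarrow> real \<Rightarrow> real" and \<delta> :: real
  assumes mercer: "\<forall>s\<in>{0..1}. \<forall>t\<in>{0..1}. r s t = (\<Sum>j<q. lam j * \<phi> j s * \<phi> j t)"
    and lam_pos: "\<forall>j<q. lam j > 0"
    and orthonormal: "\<forall>i<q. \<forall>j<q.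
           ((\<lambda>t. \<phi> i t * \<phi> j t) has_integral (if i = j then 1 else 0)) {0..1}"
    and analytic: "\<forall>j<q. \<forall>x\<in>{0<..<1}. real_analytic_at (\<phi> j) x"
    and delta: "0 < \<delta>" "\<delta> < 1"
    and K_large: "real K > (2 * real q + 1) / \<delta>"
  shows "AE t in PiM {..<K} (\<lambda>_. lborel).
           t \<in> grid_set K \<longrightarrow>
           ((\<forall>\<theta> \<in> carrier_mat K K.
               masked_frob_sq K \<delta> (kernel_mat r K t) \<theta> = 0 \<longrightarrow> \<theta> \<noteq> kernel_mat r K t \<longrightarrow>
               mrank K (kernel_mat r K t) < mrank K \<theta>)
            \<and>
            (\<exists>\<tau>0 > 0. \<forall>\<tau>. 0 < \<tau> \<and> \<tau> < \<tau>0 \<longrightarrow>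
               (\<forall>\<theta> \<in> carrier_mat K K. \<theta> \<noteq> kernel_mat r K t \<longrightarrow>
                  masked_frob_sq K \<delta> (kernel_mat r K t) (kernel_mat r K t) / (real K)\<^sup>2
                    + \<tau> * real (mrank K (kernel_mat r K t))
                  < masked_frob_sq K \<delta> (kernel_mat r K t) \<theta> / (real K)\<^sup>2
                    + \<tau> * real (mrank K \<theta>))))"
proof -
  have "2 * real q + 1 < real K * \<delta>"
    using K_large delta by (simp add: pos_divide_less_eq)
  then have band: "2 * int q < \<lfloor>real K * \<delta>\<rfloor>"
    unfolding less_floor_iff by simp
  have "2 * real q + 1 \<le> (2 * real q + 1) / \<delta>"
    using delta by (simp add: le_divide_eq)
  then have "q \<le> K" "0 < K"
    using K_large by linarith+
  have "AE t in PiM {..<K} (\<lambda>_. lborel). \<forall>a\<in>{a. a + q \<le> K}.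
          (\<forall>j<K. t j \<in> {0..1}) \<longrightarrow> det (sample_mat \<phi> q t a) \<noteq> 0"
    using AE_det_sample_mat_orthonormal_nonzero[OF orthonormal analytic]
    by (intro AE_finite_allI) (auto intro: finite_subset[of _ "{..K}"])
  then show ?thesis
  proof (rule eventually_mono, intro impI masked_rank_recovery)
    fix t assume generic: "\<forall>a\<in>{a. a + q \<le> K}. (\<forall>j<K. t j \<in> {0..1}) \<longrightarrow> det (sample_mat \<phi> q t a) \<noteq> 0"
      and "t \<in> grid_set K"
    then have box: "\<forall>j<K. t j \<in> {0..1}"
      using grid_set_unit_interval by blast
    show "mrank K (kernel_mat r K t) \<le> q"
      unfolding mrank_def by (rule rank_kernel_mat_le[OF mercer box])
    show "det (block_mat (kernel_mat r K t) a b q) \<noteq> 0" if "a + q \<le> K" "b + q \<le> K" for a b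
      using lam_pos generic box that by (intro det_block_kernel_mat_nonzero[OF mercer _ box]) auto
  qed (use band \<open>q \<le> K\<close> \<open>0 < K\<close> in \<open>auto simp: kernel_mat_def\<close>)
qed

end
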